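(* Let $q$ be a prime power, $v\ge 2$, and let $u\in\mathbb{Z}$, $m\ge0$ and $\Delta\ge1$ be integers. Let $\mathcal{C}$ be a set of points of $\mathrm{PG}(v-1,q)$ with $|\mathcal{C}\cap H|\equiv u\pmod{\Delta}$ for every hyperplane $H$ and with cardinality $n=u+m\Delta\ge0$. Then $$(q-1)\cdot\sum_{h\in\mathbb{Z},\,h\le m} h\,a_{u+h\Delta}=\left(u+m\Delta-uq\right)\cdot\frac{q^{v-1}}{\Delta}-m,$$ where $a_i$ denotes the number of hyperplanes $H$ with $|\mathcal{C}\cap H|=i$, and $a_{u+h\Delta}:=0$ whenever $u+h\Delta<0$.
   Context: $\mathrm{PG}(v-1,q)$ is the set of $1$-dimensional subspaces (points) of $\mathbb{F}_q^v$; hyperplanes are the $(v-1)$-dimensional subspaces of $\mathbb{F}_q^v$, and $\mathcal{C}\cap H$ is the set of points of $\mathcal{C}$ contained in $H$. *)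

theory Defs
  imports "HOL-Analysis.Analysis"
begin

text \<open>Projective geometry PG(v-1,q) over a finite field 'a (q = CARD('a)),
  realised on the coordinate space 'a^'n with v = CARD('n).\<close>

definition pg_points :: "('a::{finite,field}^'n) set set" where
  "pg_points = {S. vec.subspace S \<and> vec.dim S = 1}"

definition pg_hyperplanes :: "('a::{finite,field}^'n) set set" where
  "pg_hyperplanes = {H. vec.subspace H \<and> vec.dim H = CARD('n) - 1}"

definition pts_in :: "('a::{finite,field}^'n) set set \<Rightarrow> ('a^'n) set \<Rightarrow> ('a^'n) set set" where
  "pts_in C H = {P \<in> C. P \<subseteq> H}"

text \<open>a_i: number of hyperplanes H with |C \<inter> H| = i (automatically 0 for i < 0).\<close>
definition spectrum_a :: "('a::{finite,field}^'n) set set \<Rightarrow> int \<Rightarrow> nat" where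
  "spectrum_a C i = card {H \<in> pg_hyperplanes. int (card (pts_in C H)) = i}"

end

theory Submission
  imports Defs
begin

text \<open>Hyperplanes of PG(v-1,q) are the kernels of the nonzero linear forms
  x \<mapsto> \<Sum>i. f_i x_i, and each hyperplane is the kernel of exactly q - 1 forms. Counting
  forms therefore gives (q - 1) #hyperplanes = q^v - 1 and, because the forms vanishing at a
  point \<langle>p\<rangle> make up a hyperplane of the dual space, (q - 1) #{H. \<langle>p\<rangle> \<subseteq> H} = q^(v-1) - 1.
  Double counting incidences yields (q - 1) \<Sum>_H |C \<inter> H| = |C| (q^(v-1) - 1).
  Writing |C \<inter> H| = u + h_H \<Delta>, the weighted spectrum sum is \<Sum>_H h_H =
  (\<Sum>_H |C \<inter> H| - u #hyperplanes) / \<Delta>, which the two counts evaluate.\<close>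

definition dot_prod :: "'a::field^'n \<Rightarrow> 'a^'n \<Rightarrow> 'a" where
  "dot_prod f x = (\<Sum>i\<in>UNIV. f$i * x$i)"

definition form_kernel :: "'a::field^'n \<Rightarrow> ('a^'n) set" where
  "form_kernel f = {x. dot_prod f x = 0}"

lemma dot_prod_commute: "dot_prod f x = dot_prod x (f::'a::field^'n)"
  unfolding dot_prod_def by (simp add: mult.commute)

lemma dot_prod_add_right: "dot_prod f (x + y) = dot_prod f x + dot_prod f (y::'a::field^'n)"
  unfolding dot_prod_def by (simp add: distrib_left sum.distrib)

lemma dot_prod_diff_right: "dot_prod f (x - y) = dot_prod f x - dot_prod f (y::'a::field^'n)"
  unfolding dot_prod_def by (simp add: right_diff_distrib sum_subtractf)

lemma dot_prod_scale_right: "dot_prod f (c *s x) = c * dot_prod f (x::'a::field^'n)"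
  unfolding dot_prod_def by (simp add: sum_distrib_left algebra_simps)

lemma dot_prod_scale_left: "dot_prod (c *s f) x = c * dot_prod f (x::'a::field^'n)"
  unfolding dot_prod_def by (simp add: sum_distrib_left algebra_simps)

lemma dot_prod_zero_left [simp]: "dot_prod 0 x = (0::'a::field)"
  unfolding dot_prod_def by simp

lemma dot_prod_zero_right [simp]: "dot_prod f (0::'a::field^'n) = 0"
  unfolding dot_prod_def by simp

lemma dot_prod_axis_right: "dot_prod f (axis i c) = f$i * (c::'a::field)"
  unfolding dot_prod_def axis_def by (simp add: if_distrib sum.delta cong: if_cong)

lemmas dot_prod_linear_right = dot_prod_add_right dot_prod_diff_right dot_prod_scale_right

lemma dot_prod_eq_1_exists:
  assumes "f \<noteq> (0::'a::field^'n)"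
  obtains w where "dot_prod f w = 1"
proof -
  obtain i where "f$i \<noteq> 0" using assms by (auto simp: vec_eq_iff)
  then show ?thesis by (intro that[of "axis i (inverse (f$i))"]) (simp add: dot_prod_axis_right)
qed

lemma subspace_form_kernel: "vec.subspace (form_kernel (f::'a::field^'n))"
  unfolding vec.subspace_def form_kernel_def
  by (simp add: dot_prod_linear_right)

lemma span_form_kernel: "vec.span (form_kernel f) = form_kernel (f::'a::field^'n)"
  by (simp add: subspace_form_kernel)

lemma scale_in_subspace_iff:
  assumes "vec.subspace H" and "w \<notin> H"
  shows "c *s w \<in> H \<longleftrightarrow> c = (0::'a::field)"
proof
  assume "c *s w \<in> H"
  then have "inverse c *s (c *s w) \<in> H" by (rule vec.subspace_scale[OF assms(1)])
  then show "c = 0" using assms(2) by (cases "c = 0") (simp_all add: vector_smult_assoc)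
qed (simp add: vec.subspace_0[OF assms(1)])

lemma span_insert_eq_UNIV_iff:
  assumes "vec.subspace H" and "w \<notin> H"
  shows "vec.span (insert w H) = (UNIV :: ('a::field^'n) set) \<longleftrightarrow> vec.dim H = CARD('n) - 1"
proof -
  have "w \<notin> vec.span H" using assms(2) by (simp add: vec.span_eq_iff[THEN iffD2, OF assms(1)])
  then have "vec.dim (insert w H) = vec.dim H + 1" by (simp add: vec.dim_insert)
  moreover have "vec.span (insert w H) = UNIV \<longleftrightarrow> vec.dim (insert w H) = CARD('n)"
    by (simp add: vec.dimension_def card_cart_basis flip: vec.dim_eq_full)
  moreover have "CARD('n) > 0" by simp
  ultimately show ?thesis by linarith
qed

lemma span_insert_form_kernel:
  assumes "dot_prod f w = (1::'a::field)"
  shows "vec.span (insert w (form_kernel (f::'a^'n))) = UNIV"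
proof -
  have "x - dot_prod f x *s w \<in> form_kernel f" for x
    using assms by (simp add: form_kernel_def dot_prod_linear_right)
  then show ?thesis
    using vec.span_breakdown_eq span_form_kernel by blast
qed

lemma dim_form_kernel:
  assumes "f \<noteq> (0::'a::field^'n)"
  shows "vec.dim (form_kernel f) = CARD('n) - 1"
proof -
  obtain w where w: "dot_prod f w = 1" using dot_prod_eq_1_exists[OF assms] .
  then have "w \<notin> form_kernel f" by (simp add: form_kernel_def)
  with span_insert_form_kernel[OF w] show ?thesis
    using span_insert_eq_UNIV_iff subspace_form_kernel by blast
qed

lemma pg_hyperplane_is_form_kernel:
  assumes "H \<in> (pg_hyperplanes :: ('a::{finite,field}^'n) set set)"
  obtains f where "f \<noteq> 0" and "H = form_kernel f"
proof -
  have sH: "vec.subspace H" and dH: "vec.dim H = CARD('n) - 1"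
    using assms by (auto simp: pg_hyperplanes_def)
  have "H \<noteq> UNIV"
  proof
    assume "H = UNIV"
    then have "vec.dim H = CARD('n)" by (simp only: vec_dim_card)
    moreover have "CARD('n) > 0" by simp
    ultimately show False using dH by linarith
  qed
  then obtain w where w: "w \<notin> H" by blast
  have coordinate: "\<exists>!k. x - k *s w \<in> H" for x
  proof (rule ex_ex1I)
    have "x \<in> vec.span (insert w H)" using span_insert_eq_UNIV_iff[OF sH w] dH by simp
    then show "\<exists>k. x - k *s w \<in> H"
      by (simp add: vec.span_breakdown_eq vec.span_eq_iff[THEN iffD2, OF sH])
  next
    fix k l assume "x - k *s w \<in> H" "x - l *s w \<in> H"
    then have "(x - k *s w) - (x - l *s w) \<in> H" by (rule vec.subspace_diff[OF sH])
    then have "(l - k) *s w \<in> H" by (simp add: vec.scale_left_diff_distrib)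
    then have "l - k = 0" using scale_in_subspace_iff[OF sH w] by blast
    then show "k = l" by simp
  qed
  \<comment> \<open>f_i is the w-coordinate of the i-th unit vector in the splitting H \<oplus> span {w}.\<close>
  define f where "f = (\<chi> i. THE k. axis i 1 - k *s w \<in> H)"
  have axis_in: "axis i 1 - f$i *s w \<in> H" for i
    unfolding f_def vec_lambda_beta by (rule theI'[OF coordinate])
  have decomp: "x - dot_prod f x *s w \<in> H" for x
  proof -
    have "(\<Sum>i\<in>UNIV. x$i *s (axis i 1 - f$i *s w)) \<in> H"
      by (intro vec.subspace_sum[OF sH] vec.subspace_scale[OF sH axis_in])
    moreover have "(\<Sum>i\<in>UNIV. x$i *s (axis i 1 - f$i *s w)) =
        (\<Sum>i\<in>UNIV. x$i *s axis i 1) - (\<Sum>i\<in>UNIV. (f$i * x$i) *s w)"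
      by (simp add: vec.scale_right_diff_distrib sum_subtractf vector_smult_assoc mult.commute)
    moreover have "\<dots> = x - dot_prod f x *s w"
      by (simp add: basis_expansion dot_prod_def vec.scale_sum_left)
    ultimately show ?thesis by simp
  qed
  have "H = form_kernel f"
  proof (intro set_eqI iffI)
    fix x assume "x \<in> H"
    then have "x - (x - dot_prod f x *s w) \<in> H" by (rule vec.subspace_diff[OF sH _ decomp])
    then show "x \<in> form_kernel f" using scale_in_subspace_iff[OF sH w] by (simp add: form_kernel_def)
  next
    fix x assume "x \<in> form_kernel f"
    then show "x \<in> H" using decomp[of x] by (simp add: form_kernel_def)
  qed
  moreover have "f \<noteq> 0"
    using \<open>H \<noteq> UNIV\<close> calculation by (auto simp: form_kernel_def)
  ultimately show ?thesis using that by blast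
qed

lemma form_kernel_in_pg_hyperplanes:
  "f \<noteq> 0 \<Longrightarrow> form_kernel (f::'a::{finite,field}^'n) \<in> pg_hyperplanes"
  unfolding pg_hyperplanes_def using subspace_form_kernel dim_form_kernel by blast

lemma pg_hyperplanes_eq_form_kernel_image:
  "(pg_hyperplanes :: ('a::{finite,field}^'n) set set) = form_kernel ` (UNIV - {0})"
  by (auto elim!: pg_hyperplane_is_form_kernel intro: form_kernel_in_pg_hyperplanes)

lemma form_kernel_eq_iff:
  assumes f: "f \<noteq> (0::'a::field^'n)"
  shows "form_kernel g = form_kernel f \<longleftrightarrow> (\<exists>c. c \<noteq> 0 \<and> g = c *s f)"
proof
  assume eq: "form_kernel g = form_kernel f"
  obtain w where w: "dot_prod f w = 1" using dot_prod_eq_1_exists[OF f] .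
  have "dot_prod g x = dot_prod g w * dot_prod f x" for x
  proof -
    have "x - dot_prod f x *s w \<in> form_kernel g"
      using eq w by (simp add: form_kernel_def dot_prod_linear_right)
    then show ?thesis by (simp add: form_kernel_def dot_prod_linear_right algebra_simps)
  qed
  from this[of "axis _ 1"] have g: "g = dot_prod g w *s f"
    by (simp add: vec_eq_iff dot_prod_axis_right)
  moreover have "dot_prod g w \<noteq> 0"
  proof
    assume "dot_prod g w = 0"
    then have "w \<in> form_kernel f" unfolding eq[symmetric] by (simp add: form_kernel_def)
    then show False using w by (simp add: form_kernel_def)
  qed
  ultimately show "\<exists>c. c \<noteq> 0 \<and> g = c *s f" by blast
qed (auto simp: form_kernel_def dot_prod_scale_left)

lemma forms_with_same_kernel:
  assumes "f \<noteq> (0::'a::field^'n)"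
  shows "{g. form_kernel g = form_kernel f} = (\<lambda>c. c *s f) ` (UNIV - {0})"
  using form_kernel_eq_iff[OF assms] by auto

lemma card_forms_with_same_kernel:
  assumes "f \<noteq> (0::'a::{finite,field}^'n)"
  shows "card {g. form_kernel g = form_kernel f} = CARD('a) - 1"
proof -
  obtain i where "f$i \<noteq> 0" using assms by (auto simp: vec_eq_iff)
  then have "inj (\<lambda>c. c *s f)" by (auto intro!: injI simp: vec_eq_iff)
  then show ?thesis
    by (simp add: forms_with_same_kernel[OF assms] card_image inj_on_subset card_Diff_singleton)
qed

lemma card_scale_closed:
  assumes zero: "0 \<notin> S" and closed: "\<And>f c. f \<in> S \<Longrightarrow> c \<noteq> 0 \<Longrightarrow> c *s f \<in> S"
  shows "card S = (CARD('a) - 1) * card (form_kernel ` (S :: ('a::{finite,field}^'n) set))"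
proof -
  have "card S = (\<Sum>H\<in>form_kernel ` S. card {f \<in> S. form_kernel f = H})"
    using sum.group[of S "form_kernel ` S" form_kernel "\<lambda>_. 1::nat"] by simp
  also have "\<dots> = (\<Sum>H\<in>form_kernel ` S. CARD('a) - 1)"
  proof (rule sum.cong[OF refl])
    fix H assume "H \<in> form_kernel ` S"
    then obtain f where f: "f \<in> S" "H = form_kernel f" by blast
    have "f \<noteq> 0" using f zero by blast
    have "{g \<in> S. form_kernel g = H} = {g. form_kernel g = form_kernel f}"
      using form_kernel_eq_iff[OF \<open>f \<noteq> 0\<close>] closed f by auto
    then show "card {g \<in> S. form_kernel g = H} = CARD('a) - 1"
      by (simp add: card_forms_with_same_kernel[OF \<open>f \<noteq> 0\<close>])
  qed
  finally show ?thesis by (simp add: mult.commute)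
qed

lemma card_dot_prod_level_set:
  assumes "dot_prod f w = (1::'a::{finite,field})"
  shows "card {x. dot_prod f x = c} = card (form_kernel (f::'a^'n))"
proof -
  have "{x. dot_prod f x = c} = (\<lambda>x. x + c *s w) ` form_kernel f"
  proof (intro set_eqI iffI)
    fix x assume "x \<in> {x. dot_prod f x = c}"
    then have "x - c *s w \<in> form_kernel f"
      using assms by (simp add: form_kernel_def dot_prod_linear_right)
    then show "x \<in> (\<lambda>x. x + c *s w) ` form_kernel f" by (rule rev_image_eqI) simp
  qed (use assms in \<open>auto simp: form_kernel_def dot_prod_linear_right\<close>)
  moreover have "inj (\<lambda>x. x + c *s w)" by (rule injI) simp
  ultimately show ?thesis by (simp add: card_image inj_on_subset)
qed

lemma card_form_kernel:
  assumes "f \<noteq> (0::'a::{finite,field}^'n)"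
  shows "card (form_kernel f) = CARD('a) ^ (CARD('n) - 1)"
proof -
  obtain w where w: "dot_prod f w = 1" using dot_prod_eq_1_exists[OF assms] .
  have "CARD('a) ^ CARD('n) = (\<Sum>c\<in>UNIV. card {x. dot_prod f x = (c::'a)})"
    using sum.group[of UNIV UNIV "dot_prod f" "\<lambda>_. 1::nat"] by simp
  also have "\<dots> = CARD('a) * card (form_kernel f)"
    by (simp add: card_dot_prod_level_set[OF w])
  finally have "CARD('a) * CARD('a) ^ (CARD('n) - 1) = CARD('a) * card (form_kernel f)"
    by (simp flip: power_Suc)
  then show ?thesis by simp
qed

lemma card_pg_hyperplanes:
  "(int CARD('a) - 1) * int (card (pg_hyperplanes :: ('a::{finite,field}^'n) set set))
     = int CARD('a) ^ CARD('n) - 1"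
proof -
  have "card (UNIV - {0::'a^'n}) = (CARD('a) - 1) * card (form_kernel ` (UNIV - {0::'a^'n}))"
    by (rule card_scale_closed) auto
  then have "CARD('a) ^ CARD('n) - 1 = (CARD('a) - 1) * card (pg_hyperplanes :: ('a^'n) set set)"
    by (simp add: pg_hyperplanes_eq_form_kernel_image card_Diff_singleton)
  from arg_cong[OF this, of int] show ?thesis
    by (simp add: of_nat_diff one_le_power)
qed

lemma pg_point_is_span:
  assumes "P \<in> (pg_points :: ('a::{finite,field}^'n) set set)"
  obtains p where "p \<noteq> 0" and "P = vec.span {p}"
proof -
  have sP: "vec.subspace P" and dP: "vec.dim P = 1" using assms by (auto simp: pg_points_def)
  obtain B where B: "B \<subseteq> P" "vec.independent B" "P \<subseteq> vec.span B" "card B = vec.dim P"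
    using vec.basis_exists by blast
  then obtain p where p: "B = {p}" using dP card_1_singletonE by metis
  show ?thesis
  proof
    show "p \<noteq> 0" using B(2) p vec.dependent_zero by blast
    show "P = vec.span {p}" using B p sP vec.span_subspace by blast
  qed
qed

lemma span_singleton_subset_form_kernel_iff:
  "vec.span {p} \<subseteq> form_kernel f \<longleftrightarrow> dot_prod f (p::'a::field^'n) = 0"
  unfolding vec.span_singleton form_kernel_def
  by (auto simp: dot_prod_scale_right image_subset_iff dest: spec[of _ 1])

lemma card_pg_hyperplanes_through:
  assumes "P \<in> (pg_points :: ('a::{finite,field}^'n) set set)"
  shows "(CARD('a) - 1) * card {H \<in> pg_hyperplanes. P \<subseteq> H} = CARD('a) ^ (CARD('n) - 1) - 1"
proof -
  obtain p where p: "p \<noteq> 0" "P = vec.span {p}" using pg_point_is_span[OF assms] .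
  have "f \<in> form_kernel p - {0} \<longleftrightarrow> f \<noteq> 0 \<and> P \<subseteq> form_kernel f" for f
    using p(2) span_singleton_subset_form_kernel_iff[of p f] dot_prod_commute[of p f]
    by (auto simp: form_kernel_def)
  then have "{H \<in> pg_hyperplanes. P \<subseteq> H} = form_kernel ` (form_kernel p - {0})"
    by (auto simp: pg_hyperplanes_eq_form_kernel_image)
  moreover have "card (form_kernel p - {0}) = (CARD('a) - 1) * card (form_kernel ` (form_kernel p - {0}))"
    by (rule card_scale_closed) (auto simp: form_kernel_def dot_prod_scale_right)
  moreover have "0 \<in> form_kernel p" by (simp add: form_kernel_def)
  ultimately show ?thesis
    by (simp add: card_form_kernel[OF p(1)] card_Diff_singleton)
qed

lemma sum_card_pts_in_pg_hyperplanes: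
  assumes "C \<subseteq> (pg_points :: ('a::{finite,field}^'n) set set)"
  shows "(int CARD('a) - 1) * (\<Sum>H\<in>pg_hyperplanes. int (card (pts_in C H)))
           = int (card C) * (int CARD('a) ^ (CARD('n) - 1) - 1)"
proof -
  have "(\<Sum>H\<in>pg_hyperplanes. card (pts_in C H)) = (\<Sum>P\<in>C. card {H \<in> pg_hyperplanes. P \<subseteq> H})"
    unfolding pts_in_def by (rule sum_multicount_gen) simp_all
  also have "(CARD('a) - 1) * \<dots> = (\<Sum>P\<in>C. (CARD('a) - 1) * card {H \<in> pg_hyperplanes. P \<subseteq> H})"
    by (simp add: sum_distrib_left)
  also have "\<dots> = (\<Sum>P\<in>C. CARD('a) ^ (CARD('n) - 1) - 1)"
    using assms by (intro sum.cong refl card_pg_hyperplanes_through) blast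
  finally have "(CARD('a) - 1) * (\<Sum>H\<in>pg_hyperplanes. card (pts_in C H))
      = card C * (CARD('a) ^ (CARD('n) - 1) - 1)" by simp
  from arg_cong[OF this, of int] show ?thesis
    by (simp add: of_nat_diff one_le_power flip: of_nat_sum)
qed

lemma sum_levels_of_congruent_values:
  fixes k :: "'b \<Rightarrow> int"
  assumes "finite X" and "\<Delta> > 0"
    and cong: "\<And>x. x \<in> X \<Longrightarrow> k x mod \<Delta> = u mod \<Delta>"
    and bounds: "\<And>x. x \<in> X \<Longrightarrow> 0 \<le> k x \<and> k x \<le> u + m * \<Delta>"
  shows "\<Delta> * (\<Sum>h\<in>{h. h \<le> m \<and> 0 \<le> u + h * \<Delta>}. h * int (card {x \<in> X. k x = u + h * \<Delta>}))
           = (\<Sum>x\<in>X. k x - u)"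
proof -
  define levels where "levels = {h. h \<le> m \<and> 0 \<le> u + h * \<Delta>}"
  define level where "level x = (k x - u) div \<Delta>" for x
  have k_level: "k x = u + level x * \<Delta>" if "x \<in> X" for x
    using cong[OF that] by (simp add: level_def mod_eq_dvd_iff)
  have "level ` X \<subseteq> levels"
  proof
    fix h assume "h \<in> level ` X"
    then obtain x where x: "x \<in> X" "h = level x" by blast
    then have "k x = u + h * \<Delta>" using k_level by simp
    with bounds[OF x(1)] have "h * \<Delta> \<le> m * \<Delta>" and "0 \<le> u + h * \<Delta>" by linarith+
    then show "h \<in> levels" using \<open>\<Delta> > 0\<close> by (simp add: levels_def)
  qed
  moreover have "finite levels"
  proof (rule finite_subset)
    show "levels \<subseteq> {min 0 (-u)..m}"
    proof
      fix h assume "h \<in> levels"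
      then have h: "h \<le> m" "0 \<le> u + h * \<Delta>" by (simp_all add: levels_def)
      have "-u \<le> h" if "h < 0"
      proof -
        have "h * \<Delta> \<le> h" using mult_left_mono_neg[of 1 \<Delta> h] that \<open>\<Delta> > 0\<close> by simp
        then show ?thesis using h by linarith
      qed
      then show "h \<in> {min 0 (-u)..m}" using h by (cases "h < 0") auto
    qed
  qed simp
  moreover have level_fiber: "(\<Sum>x\<in>{x \<in> X. level x = h}. level x)
      = h * int (card {x \<in> X. k x = u + h * \<Delta>})" for h
  proof -
    have "{x \<in> X. k x = u + h * \<Delta>} = {x \<in> X. level x = h}"
      using k_level \<open>\<Delta> > 0\<close> by auto
    moreover have "(\<Sum>x\<in>{x \<in> X. level x = h}. level x) = (\<Sum>x\<in>{x \<in> X. level x = h}. h)"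
      by (rule sum.cong) simp_all
    ultimately show ?thesis by simp
  qed
  ultimately have "(\<Sum>h\<in>levels. h * int (card {x \<in> X. k x = u + h * \<Delta>})) = (\<Sum>x\<in>X. level x)"
    using sum.group[OF \<open>finite X\<close>, of levels level level] by (simp only: level_fiber)
  moreover have "(\<Sum>x\<in>X. k x - u) = \<Delta> * (\<Sum>x\<in>X. level x)"
    using k_level by (simp add: sum_distrib_left mult.commute)
  ultimately show ?thesis by (simp add: levels_def)
qed

theorem lemma5p3:
  fixes C :: "('a::{finite,field}^'n) set set"
    and u m \<Delta> :: int
  assumes v2: "CARD('n) \<ge> 2"
    and m0: "m \<ge> 0"
    and D1: "\<Delta> \<ge> 1"
    and CP: "C \<subseteq> pg_points"
    and div: "\<forall>H \<in> pg_hyperplanes. int (card (pts_in C H)) mod \<Delta> = u mod \<Delta>"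
    and n: "int (card C) = u + m * \<Delta>"
    and n0: "u + m * \<Delta> \<ge> 0"
  shows "(real CARD('a) - 1) *
           (\<Sum>h \<in> {h::int. h \<le> m \<and> 0 \<le> u + h * \<Delta>}. real_of_int h * real (spectrum_a C (u + h * \<Delta>)))
         = real_of_int (u + m * \<Delta> - u * int CARD('a)) * (real CARD('a) ^ (CARD('n) - 1) / real_of_int \<Delta>)
           - real_of_int m"
proof -
  let ?q = "int CARD('a)" and ?Q = "int CARD('a) ^ (CARD('n) - 1)"
  let ?hyps = "pg_hyperplanes :: ('a^'n) set set" and ?N = "\<lambda>H. int (card (pts_in C H))"
  let ?S = "\<Sum>h \<in> {h. h \<le> m \<and> 0 \<le> u + h * \<Delta>}. h * int (spectrum_a C (u + h * \<Delta>))"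
  have "\<Delta> * ?S = (\<Sum>H\<in>?hyps. ?N H - u)"
    unfolding spectrum_a_def
  proof (rule sum_levels_of_congruent_values)
    fix H :: "('a^'n) set"
    have "card (pts_in C H) \<le> card C" unfolding pts_in_def by (simp add: card_mono)
    then show "0 \<le> ?N H \<and> ?N H \<le> u + m * \<Delta>" using n by simp
  qed (use D1 div in auto)
  then have levels: "\<Delta> * ?S = (\<Sum>H\<in>?hyps. ?N H) - int (card ?hyps) * u"
    by (simp add: sum_subtractf)
  have q_power: "?q ^ CARD('n) = ?q * ?Q"
    by (simp flip: power_Suc)
  have "(?q - 1) * (\<Delta> * ?S) = (?q - 1) * (\<Sum>H\<in>?hyps. ?N H) - (?q - 1) * int (card ?hyps) * u"
    unfolding levels by (simp add: algebra_simps)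
  also have "\<dots> = (u + m * \<Delta>) * (?Q - 1) - (?q * ?Q - 1) * u"
    unfolding sum_card_pts_in_pg_hyperplanes[OF CP] card_pg_hyperplanes n q_power ..
  also have "\<dots> = (u + m * \<Delta> - u * ?q) * ?Q - m * \<Delta>"
    by (simp add: algebra_simps)
  finally have "real_of_int ((?q - 1) * \<Delta> * ?S) = real_of_int ((u + m * \<Delta> - u * ?q) * ?Q - m * \<Delta>)"
    by (simp add: mult.assoc)
  then show ?thesis
    using D1 by (simp add: of_int_sum field_simps)
qed

end
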